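(* Consider the alternating algorithm (Algorithm 1) described in the context, started from any feasible $(\mathbf S_1^{(0)},\mathbf S_2^{(0)})$. The algorithm is convergent: the sequence of objective values $\tilde e_R(\mathbf T^{(k)},\mathbf S^{(k)})$ is non-increasing and converges, and the limit point $(\bar{\mathbf T}_R,\bar{\mathbf S}_1,\bar{\mathbf S}_2)$ of the iteration is a stationary point (satisfies the KKT conditions) of the problem $\min_{\mathbf T_R,\mathbf S_1,\mathbf S_2}\tilde e_R(\mathbf T_R,\mathbf S)$ subject to $\mathrm{Tr}(\mathbf S_i\mathbf S_i^H)\le\tau_i$, $i=1,2$.
   Context: MAC phase of a MIMO two-way relay system: sources with $N_1,N_2$ antennas, relay with $M$ antennas. Let $\mathbf Z_{t,H_i}\in\mathbb C^{N_i\times N_i}$, $\mathbf Z_{r,H}\in\mathbb C^{M\times M}$ be Hermitian positive definite with $\mathbf Z_{t,H_i}=\mathbf C_{t,H_i}\mathbf C_{t,H_i}^H$, $\mathbf Z_{r,H}=\mathbf C_{r,H}\mathbf C_{r,H}^H$, $\mathbf C_{t,H}=\mathrm{Blkdiag}(\mathbf C_{t,H_1},\mathbf C_{t,H_2})$. The relay receives $\mathbf Y_R=\mathbf H_1\mathbf S_1+\mathbf H_2\mathbf S_2+\mathbf N_R$ with $\mathbf H_i=\mathbf C_{r,H}\mathbf W_{H_i}\mathbf C_{t,H_i}^T$, $\mathbf W_{H_i}$ i.i.d. $\mathcal{CN}(0,1)$ entries, training $\mathbf S_i\in\mathbb C^{N_i\times L_S}$, $\mathbf S=[\mathbf S_1^T,\mathbf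 S_2^T]^T$, $\mathrm{vec}(\mathbf N_R)\sim\mathcal{CN}(\mathbf 0,\mathbf K_R)$, $\mathbf K_R=\mathbf K_{q,R}\otimes\mathbf K_{r,R}$ positive definite. Power limits $\tau_1,\tau_2>0$. Let $\mathbf F(\mathbf S)=\mathbf S^T\mathbf C_{t,H}\otimes\mathbf C_{r,H}$, $\mathbf C_{0,H}=\mathbf C_{t,H}^H\mathbf C_{t,H}\otimes\mathbf C_{r,H}^H\mathbf C_{r,H}$, and for $\mathbf T_R\in\mathbb C^{M(N_1+N_2)\times ML_S}$ define $\tilde e_R(\mathbf T_R,\mathbf S)=\mathrm{Tr}\big[\mathbf C_{0,H}\big(\mathbf I-\mathbf F^H\mathbf T_R^H-\mathbf T_R\mathbf F+\mathbf T_R\mathbf F\mathbf F^H\mathbf T_R^H+\mathbf T_R\mathbf K_R\mathbf T_R^H\big)\big]$ (the weighted MSE of the linear estimator $\mathbf T_R\,\mathrm{vec}(\mathbf Y_R)$ of $\mathrm{vec}([\mathbf W_{H_1},\mathbf W_{H_2}])$). Algorithm 1: initialize feasible $\mathbf S_1,\mathbf S_2$; repeat (a) set $\mathbf T_R=\mathbf F^H(\mathbf F\mathbf F^H+\mathbf K_R)^{-1}$ (LMMSE estimator for the current $\mathbf S$); (b) for this fixed $\mathbf T_R$, set $(\mathbf S_1,\mathbf S_2)$ to a global minimizer of $\tilde e_R(\mathbf T_R,\mathbf S)$ subject to $\mathrm{Tr}(\mathbf S_i\mathbf S_i^H)\le\tau_i$, $i=1,2$ (a convex quadratically constrained quadratic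 program); until the MSE decrease between iterations is below a threshold. *)

theory Defs
  imports "HOL-Analysis.Analysis"
begin

definition hconj :: "complex^'n^'m \<Rightarrow> complex^'m^'n" where
  "hconj A = (\<chi> i j. cnj (A $ j $ i))"

definition herm_pd :: "complex^'n^'n \<Rightarrow> bool" where
  "herm_pd A \<longleftrightarrow> hconj A = A \<and>
     (\<forall>x::complex^'n. x \<noteq> 0 \<longrightarrow>
        Re (\<Sum>i\<in>UNIV. \<Sum>j\<in>UNIV. cnj (x $ i) * A $ i $ j * x $ j) > 0)"

definition kron :: "complex^'b^'a \<Rightarrow> complex^'d^'c \<Rightarrow> complex^('b \<times> 'd)^('a \<times> 'c)" where
  "kron A B = (\<chi> p q. A $ fst p $ fst q * B $ snd p $ snd q)"

definition blkdiag :: "complex^'a^'a \<Rightarrow> complex^'b^'b \<Rightarrow> complex^('a + 'b)^('a + 'b)" where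
  "blkdiag A B = (\<chi> i j. case (i, j) of
       (Inl a, Inl a') \<Rightarrow> A $ a $ a'
     | (Inr b, Inr b') \<Rightarrow> B $ b $ b'
     | _ \<Rightarrow> 0)"

definition stack :: "complex^'l^'a \<Rightarrow> complex^'l^'b \<Rightarrow> complex^'l^('a + 'b)" where
  "stack S1 S2 = (\<chi> i. case i of Inl a \<Rightarrow> S1 $ a | Inr b \<Rightarrow> S2 $ b)"

text \<open>F(S) = S^T C_t \<otimes> C_r (an (L_S M) x ((N1+N2) M) matrix); vec uses column
  stacking, so the index of vec(Y) for Y in C^{M x L_S} is (l, m).\<close>
definition Fmat :: "complex^'l^'n \<Rightarrow> complex^'n^'n \<Rightarrow> complex^'m^'m
                    \<Rightarrow> complex^('n \<times> 'm)^('l \<times> 'm)" where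
  "Fmat S Ct Cr = kron (transpose S ** Ct) Cr"

definition C0mat :: "complex^'n^'n \<Rightarrow> complex^'m^'m \<Rightarrow> complex^('n \<times> 'm)^('n \<times> 'm)" where
  "C0mat Ct Cr = kron (hconj Ct ** Ct) (hconj Cr ** Cr)"

text \<open>Weighted MSE \<tilde>e_R(T_R, S).  The trace is real (the bracket is Hermitian,
  C_0 is Hermitian PSD); we take its real part to obtain a real-valued objective.\<close>
definition eR :: "complex^'n^'n \<Rightarrow> complex^'m^'m \<Rightarrow> complex^('l \<times> 'm)^('l \<times> 'm)
                  \<Rightarrow> complex^('l \<times> 'm)^('n \<times> 'm) \<Rightarrow> complex^'l^'n \<Rightarrow> real" where
  "eR Ct Cr K T S =
     (let F = Fmat S Ct Cr in
      Re (trace (C0mat Ct Cr **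
        (mat 1 - hconj F ** hconj T - T ** F + T ** F ** hconj F ** hconj T
               + T ** K ** hconj T))))"

definition lmmse :: "complex^'n^'n \<Rightarrow> complex^'m^'m \<Rightarrow> complex^('l \<times> 'm)^('l \<times> 'm)
                  \<Rightarrow> complex^'l^'n \<Rightarrow> complex^('l \<times> 'm)^('n \<times> 'm)" where
  "lmmse Ct Cr K S = (let F = Fmat S Ct Cr in hconj F ** matrix_inv (F ** hconj F + K))"

definition pow :: "complex^'l^'a \<Rightarrow> real" where
  "pow S = Re (trace (S ** hconj S))"

definition kkt2 :: "('x::real_normed_vector \<Rightarrow> real) \<Rightarrow> ('x \<Rightarrow> real) \<Rightarrow> ('x \<Rightarrow> real) \<Rightarrow> 'x \<Rightarrow> bool" where
  "kkt2 f g1 g2 x \<longleftrightarrow> g1 x \<le> 0 \<and> g2 x \<le> 0 \<and>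
     (\<exists>\<mu>1 \<mu>2. \<mu>1 \<ge> 0 \<and> \<mu>2 \<ge> 0 \<and> \<mu>1 * g1 x = 0 \<and> \<mu>2 * g2 x = 0 \<and>
        ((\<lambda>y. f y + \<mu>1 * g1 y + \<mu>2 * g2 y) has_derivative (\<lambda>_. 0)) (at x))"

end

theory Submission
  imports Defs
begin

text \<open>Algorithm 1 is block coordinate descent for \<open>e\<^sub>R\<close>: step (a) minimizes exactly over
  \<open>T\<^sub>R\<close> (completing the square shows that the LMMSE estimator is the global minimizer), and
  step (b) minimizes exactly over the feasible training matrices. Hence the objective values
  decrease, and being nonnegative they converge. Since \<open>K\<^sub>R\<close> is positive definite, \<open>e\<^sub>R\<close> is
  coercive in \<open>T\<^sub>R\<close>, and step (a) never exceeds the value \<open>Tr C\<^sub>0\<^sub>,\<^sub>H\<close> attained at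
  \<open>T\<^sub>R = 0\<close>; so the iterates stay bounded and have limit points. By continuity a limit point is
  blockwise optimal: \<open>T\<^sub>R\<close> minimizes over all estimators and \<open>(S\<^sub>1, S\<^sub>2)\<close> over the product of
  the two power balls. A vanishing partial gradient in \<open>T\<^sub>R\<close> and a Lagrange multiplier for
  each ball (which exists because \<open>\<tau>\<^sub>i > 0\<close>) assemble into the KKT conditions of the joint
  problem.\<close>

section \<open>Conjugate transposes, Kronecker and block-diagonal products\<close>

lemma hconj_nth [simp]: "hconj A $ i $ j = cnj (A $ j $ i)"
  by (simp add: hconj_def)

lemma hconj_hconj [simp]: "hconj (hconj A) = A"
  by (simp add: vec_eq_iff)

lemma hconj_add: "hconj (A + B) = hconj A + hconj B"
  by (simp add: vec_eq_iff)

lemma hconj_diff: "hconj (A - B) = hconj A - hconj B"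
  by (simp add: vec_eq_iff)

lemma hconj_matrix_mult: "hconj (A ** B) = hconj B ** hconj A"
  by (simp add: vec_eq_iff matrix_matrix_mult_def mult.commute)

lemma hconj_mat_1 [simp]: "hconj (mat 1) = (mat 1 :: complex^'n^'n)"
  by (simp add: vec_eq_iff mat_def)

lemma hconj_zero [simp]: "hconj 0 = 0"
  by (simp add: vec_eq_iff)

lemma matrix_add_rdistrib: "(B + C) ** A = B ** A + C ** A"
  by (vector matrix_matrix_mult_def sum.distrib[symmetric] field_simps)

lemma matrix_diff_ldistrib: "(A::'a::ring_1^'n^'m) ** (B - C) = A ** B - A ** C"
  by (vector matrix_matrix_mult_def sum_subtractf[symmetric] field_simps)

lemma matrix_diff_rdistrib: "(B - C) ** (A::'a::ring_1^'n^'m) = B ** A - C ** A"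
  by (vector matrix_matrix_mult_def sum_subtractf[symmetric] field_simps)

lemma kron_matrix_mult: "kron A B ** kron C D = kron (A ** C) (B ** D)"
proof -
  have "(\<Sum>q\<in>UNIV \<times> UNIV. A $ fst p $ fst q * B $ snd p $ snd q * (C $ fst q $ fst s * D $ snd q $ snd s))
      = (\<Sum>k\<in>UNIV. A $ fst p $ k * C $ k $ fst s) * (\<Sum>l\<in>UNIV. B $ snd p $ l * D $ l $ snd s)"
    for p s
    by (simp add: sum_product sum.cartesian_product algebra_simps split_beta)
  then show ?thesis
    by (simp add: vec_eq_iff kron_def matrix_matrix_mult_def UNIV_Times_UNIV[symmetric]
        del: UNIV_Times_UNIV)
qed

lemma hconj_kron: "hconj (kron A B) = kron (hconj A) (hconj B)"
  by (simp add: vec_eq_iff kron_def)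

lemma kron_mat_1: "kron (mat 1) (mat 1) = (mat 1 :: complex^('n::finite \<times> 'm::finite)^('n \<times> 'm))"
  by (auto simp add: vec_eq_iff kron_def mat_def prod_eq_iff)

lemma blkdiag_matrix_mult: "blkdiag A B ** blkdiag C D = blkdiag (A ** C) (B ** D)"
  unfolding blkdiag_def matrix_matrix_mult_def
  by (auto simp add: vec_eq_iff UNIV_Plus_UNIV[symmetric] sum.Plus split: sum.splits
      simp del: UNIV_Plus_UNIV)

lemma blkdiag_mat_1: "blkdiag (mat 1) (mat 1) = mat 1"
  by (auto simp add: vec_eq_iff blkdiag_def mat_def split: sum.splits)

lemma left_invertible_kron_blkdiag:
  assumes "H1 ** C1 = mat 1" and "H2 ** C2 = mat 1" and "H3 ** C3 = mat 1"
  shows "kron (blkdiag H1 H2) H3 ** kron (blkdiag C1 C2) C3 = mat 1"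
  by (simp add: kron_matrix_mult blkdiag_matrix_mult assms blkdiag_mat_1 kron_mat_1)

lemma C0mat_eq: "C0mat Ct Cr = hconj (kron Ct Cr) ** kron Ct Cr"
  by (simp add: C0mat_def hconj_kron kron_matrix_mult)

lemma trace_C0mat:
  "trace (C0mat Ct Cr ** (X ** hconj Y)) = trace ((kron Ct Cr ** X) ** hconj (kron Ct Cr ** Y))"
proof -
  have "trace (C0mat Ct Cr ** (X ** hconj Y)) = trace (hconj (kron Ct Cr) ** (kron Ct Cr ** X ** hconj Y))"
    by (simp add: C0mat_eq matrix_mul_assoc)
  also have "\<dots> = trace (kron Ct Cr ** X ** hconj Y ** hconj (kron Ct Cr))"
    by (rule trace_mul_sym)
  finally show ?thesis
    by (simp add: hconj_matrix_mult matrix_mul_assoc)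
qed


section \<open>Quadratic forms and Frobenius norms\<close>

definition quad_form :: "complex^'n^'n \<Rightarrow> complex^'n \<Rightarrow> complex" where
  "quad_form M x = (\<Sum>i\<in>UNIV. \<Sum>j\<in>UNIV. cnj (x $ i) * M $ i $ j * x $ j)"

lemma herm_pd_quad_form_pos: "herm_pd M \<Longrightarrow> x \<noteq> 0 \<Longrightarrow> 0 < Re (quad_form M x)"
  by (simp add: herm_pd_def quad_form_def)

lemma herm_pd_quad_form_nonneg:
  assumes "herm_pd M"
  shows "0 \<le> Re (quad_form M x)"
proof (cases "x = 0")
  case True
  then show ?thesis by (simp add: quad_form_def)
next
  case False
  then show ?thesis using herm_pd_quad_form_pos[OF assms] less_imp_le by blast
qed

lemma quad_form_add: "quad_form (A + B) x = quad_form A x + quad_form B x"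
  by (simp add: quad_form_def algebra_simps sum.distrib)

lemma quad_form_scaleR: "quad_form M (c *\<^sub>R x) = complex_of_real (c^2) * quad_form M x"
  unfolding quad_form_def vector_scaleR_component
  by (simp add: scaleR_conv_of_real sum_distrib_left algebra_simps power2_eq_square)

lemma quad_form_matrix_vector_mult: "quad_form M x = (\<Sum>i\<in>UNIV. cnj (x $ i) * (M *v x) $ i)"
  by (simp add: quad_form_def matrix_vector_mult_def sum_distrib_left mult.assoc)

lemma quad_form_gram_nonneg: "0 \<le> Re (quad_form (F ** hconj F) x)"
proof -
  define w where "w k = (\<Sum>j\<in>UNIV. cnj (F $ j $ k) * x $ j)" for k
  have "(\<Sum>k\<in>UNIV. cnj (w k) * w k) =
        (\<Sum>k\<in>UNIV. \<Sum>i\<in>UNIV. \<Sum>j\<in>UNIV. x $ i * (cnj (x $ j) * (F $ j $ k * cnj (F $ i $ k))))"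
    by (simp add: w_def sum_product algebra_simps)
  also have "\<dots> = (\<Sum>i\<in>UNIV. \<Sum>k\<in>UNIV. \<Sum>j\<in>UNIV. x $ i * (cnj (x $ j) * (F $ j $ k * cnj (F $ i $ k))))"
    by (rule sum.swap)
  also have "\<dots> = (\<Sum>i\<in>UNIV. \<Sum>j\<in>UNIV. \<Sum>k\<in>UNIV. x $ i * (cnj (x $ j) * (F $ j $ k * cnj (F $ i $ k))))"
    by (intro sum.cong refl sum.swap)
  also have "\<dots> = (\<Sum>j\<in>UNIV. \<Sum>i\<in>UNIV. \<Sum>k\<in>UNIV. x $ i * (cnj (x $ j) * (F $ j $ k * cnj (F $ i $ k))))"
    by (rule sum.swap)
  also have "\<dots> = quad_form (F ** hconj F) x"
    unfolding quad_form_def matrix_matrix_mult_def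
    by (simp add: sum_distrib_left sum_distrib_right algebra_simps)
  finally have eq: "quad_form (F ** hconj F) x = (\<Sum>k\<in>UNIV. cnj (w k) * w k)" ..
  have "Re (cnj z * z) = (cmod z)^2" for z
    by (simp add: cmod_def power2_eq_square)
  then have "Re (quad_form (F ** hconj F) x) = (\<Sum>k\<in>UNIV. (cmod (w k))^2)"
    by (simp only: eq Re_sum)
  then show ?thesis by (simp add: sum_nonneg)
qed

lemma herm_pd_gram_add:
  assumes "herm_pd K"
  shows "herm_pd (F ** hconj F + K)"
  using assms quad_form_gram_nonneg[of F] herm_pd_quad_form_pos[OF assms]
  unfolding herm_pd_def quad_form_def[symmetric]
  by (simp add: hconj_add hconj_matrix_mult quad_form_add add_nonneg_pos)

lemma continuous_on_Re_quad_form: "continuous_on UNIV (\<lambda>x. Re (quad_form M x))"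
  unfolding quad_form_def by (intro continuous_intros)

text \<open>The constant is the minimum of the form over the compact unit sphere.\<close>

lemma herm_pd_quad_form_lower_bound:
  fixes M :: "complex^'n^'n"
  assumes "herm_pd M"
  shows "\<exists>c>0. \<forall>x. c * (norm x)^2 \<le> Re (quad_form M x)"
proof -
  obtain b :: "complex^'n" where "b \<in> Basis" using nonempty_Basis by blast
  then have "sphere (0::complex^'n) 1 \<noteq> {}"
    using norm_Basis by (metis empty_iff mem_sphere_0)
  then obtain x0 where x0: "x0 \<in> sphere 0 1"
    and min: "\<forall>y\<in>sphere 0 1. Re (quad_form M x0) \<le> Re (quad_form M y)"
    using continuous_attains_inf[OF compact_sphere _
        continuous_on_subset[OF continuous_on_Re_quad_form subset_UNIV]] by blast
  have "x0 \<noteq> 0" using x0 by auto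
  then have pos: "0 < Re (quad_form M x0)" using herm_pd_quad_form_pos[OF assms] by blast
  have "Re (quad_form M x0) * (norm x)^2 \<le> Re (quad_form M x)" for x
  proof (cases "x = 0")
    case True
    then show ?thesis by (simp add: quad_form_def)
  next
    case False
    define y where "y = (1 / norm x) *\<^sub>R x"
    have "Re (quad_form M x0) \<le> Re (quad_form M y)" using False min by (simp add: y_def)
    moreover have "x = norm x *\<^sub>R y" using False by (simp add: y_def)
    then have "quad_form M x = complex_of_real ((norm x)^2) * quad_form M y"
      by (metis quad_form_scaleR)
    then have "Re (quad_form M x) = (norm x)^2 * Re (quad_form M y)" by simp
    ultimately show ?thesis by (simp add: mult.commute mult_right_mono)
  qed
  then show ?thesis using pos by blast
qed

lemma herm_pd_invertible:
  fixes M :: "complex^'n^'n"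
  assumes "herm_pd M"
  shows "invertible M"
proof -
  have "x = 0" if "M *v x = 0" for x
    using that herm_pd_quad_form_pos[OF assms, of x] by (force simp: quad_form_matrix_vector_mult)
  then show ?thesis
    using matrix_left_invertible_ker invertible_left_inverse by blast
qed

lemma matrix_inv_inverse:
  fixes M :: "'a::field^'n^'n"
  assumes "invertible M"
  shows "M ** matrix_inv M = mat 1" and "matrix_inv M ** M = mat 1"
proof -
  have "\<exists>A'. M ** A' = mat 1 \<and> A' ** M = mat 1" using assms invertible_def by blast
  then have "M ** matrix_inv M = mat 1 \<and> matrix_inv M ** M = mat 1"
    unfolding matrix_inv_def by (rule someI_ex)
  then show "M ** matrix_inv M = mat 1" and "matrix_inv M ** M = mat 1" by auto
qed

lemma hconj_matrix_inv:
  fixes M :: "complex^'n^'n"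
  assumes "invertible M" and "hconj M = M"
  shows "hconj (matrix_inv M) = matrix_inv M"
proof -
  have left: "hconj (matrix_inv M) ** M = mat 1"
    using matrix_inv_inverse(1)[OF assms(1)] by (metis assms(2) hconj_mat_1 hconj_matrix_mult)
  have "hconj (matrix_inv M) = hconj (matrix_inv M) ** (M ** matrix_inv M)"
    using matrix_inv_inverse[OF assms(1)] by simp
  also have "\<dots> = matrix_inv M"
    by (simp add: matrix_mul_assoc left)
  finally show ?thesis .
qed

lemma left_invertible_of_herm_pd_gram:
  fixes C :: "complex^'n^'n"
  assumes "herm_pd (C ** hconj C)"
  shows "\<exists>H. H ** C = mat 1"
proof -
  have "C ** (hconj C ** matrix_inv (C ** hconj C)) = mat 1"
    using matrix_inv_inverse(1)[OF herm_pd_invertible[OF assms]] by (simp add: matrix_mul_assoc)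
  then show ?thesis using matrix_left_right_inverse by blast
qed

lemma norm_power2_vector: "(norm (x::complex^'n))^2 = (\<Sum>j\<in>UNIV. (cmod (x $ j))^2)"
  by (simp add: power2_norm_eq_inner inner_vec_def)

lemma norm_power2_matrix: "(norm (A::complex^'n^'m))^2 = (\<Sum>i\<in>UNIV. \<Sum>j\<in>UNIV. (cmod (A $ i $ j))^2)"
  by (simp add: power2_norm_eq_inner inner_vec_def)

lemma Re_trace_mult_hconj: "Re (trace (Y ** hconj Y)) = (norm (Y::complex^'n^'m))^2"
proof -
  have "Re (z * cnj z) = (cmod z)^2" for z
    by (simp add: cmod_def power2_eq_square)
  then show ?thesis
    unfolding norm_power2_matrix trace_def matrix_matrix_mult_def by (simp add: Re_sum)
qed

lemma pow_eq_norm_power2: "pow A = (norm A)^2"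
  by (simp add: pow_def Re_trace_mult_hconj)

lemma Re_trace_sandwich:
  "Re (trace (Y ** M ** hconj Y)) = (\<Sum>i\<in>UNIV. Re (quad_form M (\<chi> j. cnj (Y $ i $ j))))"
proof -
  have "(\<Sum>k\<in>UNIV. (\<Sum>j\<in>UNIV. Y $ i $ j * M $ j $ k) * cnj (Y $ i $ k)) =
        (\<Sum>j\<in>UNIV. \<Sum>k\<in>UNIV. cnj (cnj (Y $ i $ j)) * M $ j $ k * cnj (Y $ i $ k))" for i
    by (simp add: sum_distrib_right) (rule sum.swap)
  then show ?thesis
    unfolding trace_def quad_form_def matrix_matrix_mult_def
    by (simp only: vec_lambda_beta hconj_nth Re_sum)
qed

lemma Re_trace_sandwich_ge:
  assumes "\<And>y. c * (norm y)^2 \<le> Re (quad_form M y)"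
  shows "c * (norm Y)^2 \<le> Re (trace (Y ** M ** hconj Y))"
proof -
  have "c * (norm Y)^2 = (\<Sum>i\<in>UNIV. c * (norm (\<chi> j. cnj (Y $ i $ j)))^2)"
    by (simp add: norm_power2_matrix norm_power2_vector sum_distrib_left)
  also have "\<dots> \<le> (\<Sum>i\<in>UNIV. Re (quad_form M (\<chi> j. cnj (Y $ i $ j))))"
    by (intro sum_mono assms)
  also have "\<dots> = Re (trace (Y ** M ** hconj Y))"
    by (simp add: Re_trace_sandwich)
  finally show ?thesis .
qed


section \<open>The weighted MSE and the LMMSE estimator\<close>

lemma Re_trace_C0mat_sandwich_ge:
  assumes "\<And>y. c * (norm y)^2 \<le> Re (quad_form M y)"
  shows "c * (norm (kron Ct Cr ** D))^2 \<le> Re (trace (C0mat Ct Cr ** (D ** M ** hconj D)))"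
  using Re_trace_sandwich_ge[OF assms, of "kron Ct Cr ** D"]
  unfolding trace_C0mat by (simp add: matrix_mul_assoc)

lemma eR_eq_norm_power2_add:
  "eR Ct Cr K T S = (norm (kron Ct Cr ** (mat 1 - T ** Fmat S Ct Cr)))^2
      + Re (trace (C0mat Ct Cr ** (T ** K ** hconj T)))"
proof -
  define F where "F = Fmat S Ct Cr"
  define E where "E = mat 1 - T ** F"
  have "E ** hconj E = (mat 1 - hconj F ** hconj T) - (T ** F - T ** F ** hconj F ** hconj T)"
    unfolding E_def hconj_diff hconj_matrix_mult hconj_mat_1 matrix_diff_rdistrib matrix_diff_ldistrib
    by (simp add: matrix_mul_assoc)
  then have bracket: "mat 1 - hconj F ** hconj T - T ** F + T ** F ** hconj F ** hconj T
      + T ** K ** hconj T = E ** hconj E + T ** K ** hconj T"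
    by (simp add: algebra_simps)
  have "eR Ct Cr K T S = Re (trace (C0mat Ct Cr ** (E ** hconj E + T ** K ** hconj T)))"
    unfolding eR_def Let_def F_def[symmetric] bracket ..
  also have "\<dots> = Re (trace (C0mat Ct Cr ** (E ** hconj E)))
      + Re (trace (C0mat Ct Cr ** (T ** K ** hconj T)))"
    by (simp only: matrix_add_ldistrib trace_add plus_complex.sel)
  finally show ?thesis
    by (simp add: trace_C0mat Re_trace_mult_hconj E_def F_def)
qed

lemma eR_ge:
  assumes "\<And>y. c * (norm y)^2 \<le> Re (quad_form K y)"
  shows "c * (norm (kron Ct Cr ** T))^2 \<le> eR Ct Cr K T S"
  using Re_trace_C0mat_sandwich_ge[OF assms, of Ct Cr T] zero_le_power2
  unfolding eR_eq_norm_power2_add[of Ct Cr K T S] by (smt (verit))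

lemma eR_nonneg:
  assumes "herm_pd K"
  shows "0 \<le> eR Ct Cr K T S"
  using eR_ge[of 0 K Ct Cr T S] herm_pd_quad_form_nonneg[OF assms] by simp

lemma eR_zero: "eR Ct Cr K 0 S = Re (trace (C0mat Ct Cr))"
  by (simp add: eR_def Let_def)

text \<open>Completing the square: with \<open>M = F F\<^sup>H + K\<close> and \<open>T = T\<^sub>0 + D\<close> for the LMMSE estimator
  \<open>T\<^sub>0 = F\<^sup>H M\<^sup>-\<^sup>1\<close>, the cross terms cancel and \<open>e\<^sub>R(T) = e\<^sub>R(T\<^sub>0) + Tr[C\<^sub>0 D M D\<^sup>H]\<close>.\<close>

lemma eR_lmmse_le:
  assumes K: "herm_pd K"
  shows "eR Ct Cr K (lmmse Ct Cr K S) S \<le> eR Ct Cr K T S"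
proof -
  define F where "F = Fmat S Ct Cr"
  define M where "M = F ** hconj F + K"
  have M: "herm_pd M" unfolding M_def using K by (rule herm_pd_gram_add)
  define Mi where "Mi = matrix_inv M"
  have MMi: "M ** Mi = mat 1" and MiM: "Mi ** M = mat 1"
    using matrix_inv_inverse[OF herm_pd_invertible[OF M]] by (simp_all add: Mi_def)
  have hMi: "hconj Mi = Mi"
    using hconj_matrix_inv[OF herm_pd_invertible[OF M]] M by (simp add: Mi_def herm_pd_def)
  define T0 where "T0 = hconj F ** Mi"
  have lmmse: "lmmse Ct Cr K S = T0"
    by (simp add: lmmse_def Let_def T0_def Mi_def M_def F_def)
  define D where "D = T - T0"
  define B where "B X = mat 1 - hconj F ** hconj X - X ** F + X ** M ** hconj X" for X
  have eR_B: "eR Ct Cr K X S = Re (trace (C0mat Ct Cr ** B X))" for X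
  proof -
    have "X ** F ** hconj F ** hconj X + X ** K ** hconj X = X ** M ** hconj X"
      by (simp add: M_def matrix_add_ldistrib matrix_add_rdistrib matrix_mul_assoc)
    then show ?thesis unfolding eR_def Let_def F_def[symmetric] B_def by (simp add: add.assoc)
  qed
  have T0M: "T0 ** M = hconj F" by (simp add: T0_def matrix_mul_assoc[symmetric] MiM)
  have MT0: "M ** hconj T0 = F" by (simp add: T0_def hconj_matrix_mult hMi matrix_mul_assoc MMi)
  have TD: "T = T0 + D" by (simp add: D_def)
  have "T ** M ** hconj T
      = T0 ** M ** hconj T0 + T0 ** M ** hconj D + D ** M ** hconj T0 + D ** M ** hconj D"
    by (simp add: TD hconj_add matrix_add_ldistrib matrix_add_rdistrib add.assoc)
  also have "T0 ** M ** hconj D = hconj F ** hconj D" by (simp add: T0M)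
  also have "D ** M ** hconj T0 = D ** F" by (simp add: matrix_mul_assoc[symmetric] MT0)
  finally have "B T = B T0 + D ** M ** hconj D"
    unfolding B_def by (simp add: TD hconj_add matrix_add_ldistrib matrix_add_rdistrib algebra_simps)
  then have "eR Ct Cr K T S = eR Ct Cr K T0 S + Re (trace (C0mat Ct Cr ** (D ** M ** hconj D)))"
    by (simp add: eR_B matrix_add_ldistrib trace_add)
  moreover have "0 \<le> Re (trace (C0mat Ct Cr ** (D ** M ** hconj D)))"
    using Re_trace_C0mat_sandwich_ge[of 0 M Ct Cr D] herm_pd_quad_form_nonneg[OF M] by simp
  ultimately show ?thesis using lmmse by simp
qed

lemma linear_matrix_mult_left: "linear (\<lambda>X. (H::complex^'n^'m) ** X)"
  by (rule linearI) (simp_all add: matrix_add_ldistrib matrix_scalar_ac scalar_matrix_assoc)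

lemma linear_matrix_mult_right: "linear (\<lambda>X. X ** (H::complex^'n^'m))"
  by (rule linearI) (simp_all add: matrix_add_rdistrib scalar_matrix_assoc)

lemma left_invertible_norm_le:
  fixes G :: "complex^'n^'m" and H :: "complex^'m^'n"
  assumes "H ** G = mat 1"
  shows "\<exists>c>0. \<forall>T::complex^'p^'n. norm T \<le> c * norm (G ** T)"
proof -
  obtain c where "c > 0" and c: "\<And>X::complex^'p^'m. norm (H ** X) \<le> norm X * c"
    using bounded_linear.pos_bounded linear_matrix_mult_left linear_conv_bounded_linear by blast
  have "norm T \<le> c * norm (G ** T)" for T :: "complex^'p^'n"
  proof -
    have "T = H ** (G ** T)" by (simp only: matrix_mul_assoc assms matrix_mul_lid)
    then show ?thesis using c[of "G ** T"] by (simp add: mult.commute)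
  qed
  then show ?thesis using \<open>c > 0\<close> by blast
qed

text \<open>Coercivity in \<open>T\<close>, together with \<open>e\<^sub>R(T\<^sub>0, S) \<le> e\<^sub>R(0, S) = Tr C\<^sub>0\<close>, bounds the
  estimator independently of the training matrix.\<close>

lemma norm_lmmse_bounded:
  fixes Ct :: "complex^'n::finite^'n" and Cr :: "complex^'m::finite^'m"
    and K :: "complex^('l::finite \<times> 'm)^('l \<times> 'm)"
  assumes "herm_pd K" and "H ** kron Ct Cr = mat 1"
  shows "\<exists>B. \<forall>S. norm (lmmse Ct Cr K S) \<le> B"
proof -
  obtain c where "c > 0" and c: "\<And>y. c * (norm y)^2 \<le> Re (quad_form K y)"
    using herm_pd_quad_form_lower_bound[OF assms(1)] by blast
  obtain c1 where "c1 > 0"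
    and c1: "\<And>T :: complex^('l \<times> 'm)^('n \<times> 'm). norm T \<le> c1 * norm (kron Ct Cr ** T)"
    using left_invertible_norm_le[OF assms(2)] by blast
  define R0 where "R0 = Re (trace (C0mat Ct Cr))"
  have "norm (lmmse Ct Cr K S) \<le> c1 * sqrt (R0 / c)" for S
  proof -
    define T0 where "T0 = lmmse Ct Cr K S"
    have "c * (norm (kron Ct Cr ** T0))^2 \<le> eR Ct Cr K T0 S" by (rule eR_ge[OF c])
    also have "\<dots> \<le> eR Ct Cr K 0 S" unfolding T0_def using assms(1) by (rule eR_lmmse_le)
    also have "\<dots> = R0" by (simp add: eR_zero R0_def)
    finally have "norm (kron Ct Cr ** T0) \<le> sqrt (R0 / c)"
      using \<open>c > 0\<close> by (intro real_le_rsqrt) (simp add: field_simps)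
    then have "c1 * norm (kron Ct Cr ** T0) \<le> c1 * sqrt (R0 / c)"
      using \<open>c1 > 0\<close> by (simp add: mult_left_mono)
    then show ?thesis
      using c1[of T0] unfolding T0_def by linarith
  qed
  then show ?thesis by blast
qed


section \<open>Smoothness of the objective\<close>

lemma bounded_bilinear_matrix_mult:
  "bounded_bilinear ((**) :: complex^'n^'m \<Rightarrow> complex^'p^'n \<Rightarrow> complex^'p^'m)"
  unfolding bilinear_conv_bounded_bilinear[symmetric] bilinear_def
  using linear_matrix_mult_left linear_matrix_mult_right by blast

lemma differentiable_matrix_mult:
  fixes f :: "'a::real_normed_vector \<Rightarrow> complex^'n^'m" and g :: "'a \<Rightarrow> complex^'p^'n"
  shows "f differentiable (at x) \<Longrightarrow> g differentiable (at x) \<Longrightarrow> (\<lambda>y. f y ** g y) differentiable (at x)"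
  unfolding differentiable_def
  using bounded_bilinear.FDERIV[OF bounded_bilinear_matrix_mult] by blast

lemma differentiable_bounded_linear_compose:
  "bounded_linear l \<Longrightarrow> f differentiable (at x) \<Longrightarrow> (\<lambda>y. l (f y)) differentiable (at x)"
  by (rule differentiable_compose[OF bounded_linear_imp_differentiable])

lemma bounded_linear_hconj: "bounded_linear (hconj :: complex^'n^'m \<Rightarrow> complex^'m^'n)"
  unfolding linear_conv_bounded_linear[symmetric]
  by (rule linearI) (simp_all add: vec_eq_iff)

lemma bounded_linear_transpose: "bounded_linear (transpose :: complex^'n^'m \<Rightarrow> complex^'m^'n)"
  unfolding linear_conv_bounded_linear[symmetric]
  by (rule linearI) (simp_all add: vec_eq_iff transpose_def)

lemma bounded_linear_trace: "bounded_linear (trace :: complex^'n^'n \<Rightarrow> complex)"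
  unfolding linear_conv_bounded_linear[symmetric]
  by (rule linearI) (simp_all add: trace_def sum.distrib scaleR_sum_right)

lemma bounded_linear_kron_left:
  "bounded_linear (\<lambda>A. kron A (B::complex^'d::finite^'c::finite)
     :: complex^('b::finite \<times> 'd)^('a::finite \<times> 'c))"
  unfolding linear_conv_bounded_linear[symmetric]
  by (rule linearI) (simp_all add: vec_eq_iff kron_def algebra_simps)

lemma bounded_linear_stack:
  "bounded_linear (\<lambda>p. stack (fst p) (snd p) :: complex^'l::finite^('a::finite + 'b::finite))"
  unfolding linear_conv_bounded_linear[symmetric]
  by (rule linearI) (auto simp: vec_eq_iff stack_def split: sum.splits)

lemma differentiable_eR:
  fixes Ct :: "complex^'n^'n" and Cr :: "complex^'m^'m" and K :: "complex^('l::finite \<times> 'm)^('l \<times> 'm)"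
  shows "(\<lambda>y::(complex^('l \<times> 'm)^('n \<times> 'm)) \<times> (complex^'l^'n). eR Ct Cr K (fst y) (snd y))
    differentiable (at x)"
proof -
  have "(\<lambda>y::(complex^('l \<times> 'm)^('n \<times> 'm)) \<times> (complex^'l^'n). Fmat (snd y) Ct Cr)
      differentiable (at x)"
    unfolding Fmat_def
    by (intro differentiable_bounded_linear_compose[OF bounded_linear_kron_left]
        differentiable_matrix_mult differentiable_const
        differentiable_bounded_linear_compose[OF bounded_linear_transpose]
        bounded_linear_imp_differentiable[OF bounded_linear_snd])
  moreover have "(\<lambda>y::(complex^('l \<times> 'm)^('n \<times> 'm)) \<times> (complex^'l^'n). fst y) differentiable (at x)"
    by (rule bounded_linear_imp_differentiable[OF bounded_linear_fst])
  ultimately show ?thesis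
    unfolding eR_def Let_def
    by (intro differentiable_bounded_linear_compose[OF bounded_linear_Re]
        differentiable_bounded_linear_compose[OF bounded_linear_trace]
        differentiable_bounded_linear_compose[OF bounded_linear_hconj]
        differentiable_matrix_mult differentiable_const differentiable_add differentiable_diff)
qed

lemma differentiable_eR_stack:
  fixes Ct :: "complex^('a::finite + 'b::finite)^('a + 'b)" and Cr :: "complex^'m^'m"
    and K :: "complex^('l::finite \<times> 'm)^('l \<times> 'm)"
  shows "(\<lambda>(T::complex^('l \<times> 'm)^(('a + 'b) \<times> 'm), A::complex^'l^'a, B::complex^'l^'b).
    eR Ct Cr K T (stack A B)) differentiable (at x)"
proof -
  have "(\<lambda>(T::complex^('l \<times> 'm)^(('a + 'b) \<times> 'm), A::complex^'l^'a, B::complex^'l^'b).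
      eR Ct Cr K T (stack A B))
      = (\<lambda>y. eR Ct Cr K (fst y) (snd y)) \<circ> (\<lambda>y. (fst y, stack (fst (snd y)) (snd (snd y))))"
    by (auto simp: fun_eq_iff)
  moreover have "bounded_linear (\<lambda>y::(complex^('l \<times> 'm)^(('a + 'b) \<times> 'm)) \<times> (complex^'l^'a)
      \<times> (complex^'l^'b). stack (fst (snd y)) (snd (snd y)))"
    using bounded_linear_compose[OF bounded_linear_stack bounded_linear_snd] by (simp add: o_def)
  ultimately show ?thesis
    by (simp only:) (intro differentiable_chain_at differentiable_eR differentiable_Pair
        bounded_linear_imp_differentiable[OF bounded_linear_fst] bounded_linear_imp_differentiable)
qed


section \<open>First-order conditions on a product of balls\<close>

lemma has_derivative_nonneg_at_right_min:
  fixes f :: "'a::real_normed_vector \<Rightarrow> real"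
  assumes df: "(f has_derivative D) (at x)"
    and min: "eventually (\<lambda>t. f x \<le> f (x + t *\<^sub>R h)) (at_right 0)"
  shows "0 \<le> D h"
proof -
  define g where "g t = f (x + t *\<^sub>R h)" for t :: real
  have "((\<lambda>t. x + t *\<^sub>R h) has_derivative (\<lambda>t. 0 + t *\<^sub>R h)) (at 0)"
    by (intro has_derivative_add has_derivative_const
        bounded_linear_imp_has_derivative bounded_linear_scaleR_left)
  moreover have "(f has_derivative D) (at (x + 0 *\<^sub>R h))" using df by simp
  ultimately have "(g has_derivative (\<lambda>t. D (0 + t *\<^sub>R h))) (at 0)"
    unfolding g_def by (rule has_derivative_compose)
  moreover have "(\<lambda>t. D (0 + t *\<^sub>R h)) = (*) (D h)"
    using linear_scale[OF has_derivative_linear[OF df]] by (simp add: fun_eq_iff mult.commute)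
  ultimately have "(g has_field_derivative D h) (at 0)"
    by (simp add: has_field_derivative_def)
  then have "((\<lambda>t. (g t - g 0) / t) \<longlongrightarrow> D h) (at_right 0)"
    unfolding has_field_derivative_iff by (auto intro: tendsto_mono[OF at_le])
  moreover have "eventually (\<lambda>t. 0 \<le> (g t - g 0) / t) (at_right 0)"
    using min eventually_at_right_less[of "0::real"]
    by eventually_elim (simp add: g_def)
  ultimately show ?thesis
    by (rule tendsto_lowerbound) simp
qed

lemma norm_add_scaleR_power2:
  fixes a d :: "'a::real_inner"
  shows "(norm (a + t *\<^sub>R d))^2 = (norm a)^2 + t * (2 * inner a d + t * (norm d)^2)"
  by (simp only: power2_norm_eq_inner)
     (simp add: inner_add_left inner_add_right inner_commute algebra_simps power2_eq_square)

lemma eventually_norm_power2_le_at_right: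
  fixes a d :: "'a::real_inner"
  assumes "(norm a)^2 \<le> \<tau>" and "inner a d < 0"
  shows "eventually (\<lambda>t. (norm (a + t *\<^sub>R d))^2 \<le> \<tau>) (at_right 0)"
proof -
  have "((\<lambda>t. 2 * inner a d + t * (norm d)^2) \<longlongrightarrow> 2 * inner a d + 0 * (norm d)^2) (at_right 0)"
    by (intro tendsto_intros)
  from order_tendstoD(2)[OF this, of 0] assms(2)
  have "eventually (\<lambda>t. 2 * inner a d + t * (norm d)^2 < 0) (at_right 0)" by simp
  with eventually_at_right_less[of "0::real"] show ?thesis
  proof eventually_elim
    case (elim t)
    then have "t * (2 * inner a d + t * (norm d)^2) \<le> 0"
      by (simp add: mult_pos_neg less_imp_le)
    with assms(1) show ?case by (simp add: norm_add_scaleR_power2)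
  qed
qed

lemma linear_nonneg_on_open_halfspace:
  fixes \<phi> :: "'a::real_inner \<Rightarrow> real"
  assumes lin: "linear \<phi>" and "a \<noteq> 0"
    and nonneg: "\<And>d. inner a d < 0 \<Longrightarrow> 0 \<le> \<phi> d"
  shows "\<exists>\<nu>\<ge>0. \<forall>d. \<phi> d = - \<nu> * inner a d"
proof -
  have aa: "0 < inner a a" using \<open>a \<noteq> 0\<close> by simp
  have "0 \<le> \<phi> (- a)" using aa by (intro nonneg) simp
  then have \<phi>a: "\<phi> a \<le> 0" using linear_neg[OF lin, of a] by simp
  have perp_nonneg: "0 \<le> \<phi> p" if "inner a p = 0" for p
  proof (rule tendsto_lowerbound)
    show "((\<lambda>e. \<phi> p - e * \<phi> a) \<longlongrightarrow> \<phi> p) (at_right 0)"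
      by (auto intro!: tendsto_eq_intros)
    show "eventually (\<lambda>e. 0 \<le> \<phi> p - e * \<phi> a) (at_right 0)"
      using eventually_at_right_less[of "0::real"]
    proof eventually_elim
      case (elim e)
      with aa that have "0 \<le> \<phi> (p - e *\<^sub>R a)" by (intro nonneg) (simp add: inner_diff_right)
      then show ?case by (simp add: linear_diff[OF lin] linear_scale[OF lin])
    qed
  qed simp
  have perp: "\<phi> p = 0" if "inner a p = 0" for p
    using perp_nonneg[of p] perp_nonneg[of "- p"] that linear_neg[OF lin, of p] by simp
  have "\<phi> d = - (- \<phi> a / inner a a) * inner a d" for d
  proof -
    define c where "c = inner a d / inner a a"
    have "inner a (d - c *\<^sub>R a) = 0" using aa by (simp add: c_def inner_diff_right)
    then have "\<phi> (d - c *\<^sub>R a) = 0" by (rule perp)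
    then have "\<phi> d = c * \<phi> a" by (simp add: linear_diff[OF lin] linear_scale[OF lin])
    then show ?thesis using aa by (simp add: c_def field_simps)
  qed
  moreover have "0 \<le> - \<phi> a / inner a a" using \<phi>a aa by (simp add: divide_nonpos_pos)
  ultimately show ?thesis by blast
qed

lemma ball_constrained_min_multiplier:
  fixes g :: "'a::real_inner \<Rightarrow> real"
  assumes dg: "(g has_derivative D) (at a)" and "0 < \<tau>" and a: "(norm a)^2 \<le> \<tau>"
    and min: "\<And>y. (norm y)^2 \<le> \<tau> \<Longrightarrow> g a \<le> g y"
  shows "\<exists>\<mu>\<ge>0. \<mu> * ((norm a)^2 - \<tau>) = 0 \<and> (\<forall>d. D d + \<mu> * (2 * inner a d) = 0)"
proof (cases "(norm a)^2 < \<tau>")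
  case True
  have "open {y::'a. (norm y)^2 < \<tau>}"
    by (intro open_Collect_less continuous_intros)
  moreover have "\<forall>y\<in>{y. (norm y)^2 < \<tau>}. g a \<le> g y"
    using min by (simp add: less_imp_le)
  ultimately have "D = (\<lambda>_. 0)"
    using True by (intro differential_zero_maxmin[OF _ _ dg disjI2]) auto
  then show ?thesis by (intro exI[of _ 0]) simp
next
  case False
  \<comment> \<open>Since \<open>\<tau> > 0\<close>, the constraint gradient \<open>2 a\<close> does not vanish on the boundary.\<close>
  with a \<open>0 < \<tau>\<close> have boundary: "(norm a)^2 = \<tau>" and "a \<noteq> 0" by auto
  have "0 \<le> D d" if "inner a d < 0" for d
    using dg eventually_mono[OF eventually_norm_power2_le_at_right[OF a that] min]
    by (rule has_derivative_nonneg_at_right_min)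
  then obtain \<nu> where "\<nu> \<ge> 0" and D: "\<And>d. D d = - \<nu> * inner a d"
    using linear_nonneg_on_open_halfspace[OF has_derivative_linear[OF dg] \<open>a \<noteq> 0\<close>] by blast
  then show ?thesis using boundary by (intro exI[of _ "\<nu> / 2"]) (simp add: D)
qed

lemma kkt2_blockwise_min:
  fixes f :: "'a::real_normed_vector \<times> 'b::real_inner \<times> 'c::real_inner \<Rightarrow> real"
  assumes "f differentiable (at (t, a, b))" and "0 < \<tau>1" "0 < \<tau>2"
    and a: "(norm a)^2 \<le> \<tau>1" and b: "(norm b)^2 \<le> \<tau>2"
    and min_t: "\<And>t'. f (t, a, b) \<le> f (t', a, b)"
    and min_ab: "\<And>a' b'. (norm a')^2 \<le> \<tau>1 \<Longrightarrow> (norm b')^2 \<le> \<tau>2 \<Longrightarrow> f (t, a, b) \<le> f (t, a', b')"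
  shows "kkt2 f (\<lambda>(t, a, b). (norm a)^2 - \<tau>1) (\<lambda>(t, a, b). (norm b)^2 - \<tau>2) (t, a, b)"
proof -
  obtain D where D: "(f has_derivative D) (at (t, a, b))"
    using assms(1) by (auto simp: differentiable_def)
  have lin: "linear D" using D by (rule has_derivative_linear)
  have "((\<lambda>t'. (t', a, b)) has_derivative (\<lambda>h. (h, 0, 0))) (at t)"
    by (intro has_derivative_Pair has_derivative_ident has_derivative_const)
  from has_derivative_compose[OF this D]
  have "((\<lambda>t'. f (t', a, b)) has_derivative (\<lambda>h. D (h, 0, 0))) (at t)" .
  then have "(\<lambda>h. D (h, 0, 0)) = (\<lambda>_. 0)"
    using min_t by (intro differential_zero_maxmin[of t UNIV]) auto
  then have D_t: "D (h, 0, 0) = 0" for h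
    by (rule fun_cong)
  have "((\<lambda>a'. (t, a', b)) has_derivative (\<lambda>d. (0, d, 0))) (at a)"
    by (intro has_derivative_Pair has_derivative_ident has_derivative_const)
  from has_derivative_compose[OF this D]
  have "((\<lambda>a'. f (t, a', b)) has_derivative (\<lambda>d. D (0, d, 0))) (at a)" .
  from ball_constrained_min_multiplier[OF this \<open>0 < \<tau>1\<close> a min_ab[OF _ b]]
  obtain \<mu>1 where \<mu>1: "\<mu>1 \<ge> 0" "\<mu>1 * ((norm a)^2 - \<tau>1) = 0"
    "\<And>d. D (0, d, 0) + \<mu>1 * (2 * inner a d) = 0" by blast
  have "((\<lambda>b'. (t, a, b')) has_derivative (\<lambda>d. (0, 0, d))) (at b)"
    by (intro has_derivative_Pair has_derivative_ident has_derivative_const)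
  from has_derivative_compose[OF this D]
  have "((\<lambda>b'. f (t, a, b')) has_derivative (\<lambda>d. D (0, 0, d))) (at b)" .
  from ball_constrained_min_multiplier[OF this \<open>0 < \<tau>2\<close> b min_ab[OF a]]
  obtain \<mu>2 where \<mu>2: "\<mu>2 \<ge> 0" "\<mu>2 * ((norm b)^2 - \<tau>2) = 0"
    "\<And>d. D (0, 0, d) + \<mu>2 * (2 * inner b d) = 0" by blast
  have "D (h, d, e) + \<mu>1 * (2 * inner a d) + \<mu>2 * (2 * inner b e) = 0" for h d e
  proof -
    have "D (h, d, e) = D (h, 0, 0) + D (0, d, 0) + D (0, 0, e)"
      using linear_add[OF lin, of "(h, 0, 0) + (0, d, 0)" "(0, 0, e)"]
        linear_add[OF lin, of "(h, 0, 0)" "(0, d, 0)"] by simp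
    then show ?thesis using D_t[of h] \<mu>1(3)[of d] \<mu>2(3)[of e] by linarith
  qed
  then have zero: "(\<lambda>h. D h + \<mu>1 * (2 * inner a (fst (snd h))) + \<mu>2 * (2 * inner b (snd (snd h))))
      = (\<lambda>_. 0)"
    by (auto simp: fun_eq_iff)
  have dA: "((\<lambda>y. inner (fst (snd y)) (fst (snd y)) - \<tau>1)
      has_derivative (\<lambda>h. 2 * inner a (fst (snd h)))) (at (t, a, b))"
  proof (rule has_derivative_eq_rhs)
    show "((\<lambda>y. inner (fst (snd y)) (fst (snd y)) - \<tau>1) has_derivative (\<lambda>h.
        inner (fst (snd (t, a, b))) (fst (snd h)) + inner (fst (snd h)) (fst (snd (t, a, b))) - 0))
        (at (t, a, b))"
      by (intro has_derivative_diff has_derivative_const has_derivative_inner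
          has_derivative_fst has_derivative_snd has_derivative_ident)
  qed (simp add: fun_eq_iff inner_commute)
  have dB: "((\<lambda>y. inner (snd (snd y)) (snd (snd y)) - \<tau>2)
      has_derivative (\<lambda>h. 2 * inner b (snd (snd h)))) (at (t, a, b))"
  proof (rule has_derivative_eq_rhs)
    show "((\<lambda>y. inner (snd (snd y)) (snd (snd y)) - \<tau>2) has_derivative (\<lambda>h.
        inner (snd (snd (t, a, b))) (snd (snd h)) + inner (snd (snd h)) (snd (snd (t, a, b))) - 0))
        (at (t, a, b))"
      by (intro has_derivative_diff has_derivative_const has_derivative_inner
          has_derivative_snd has_derivative_ident)
  qed (simp add: fun_eq_iff inner_commute)
  have "((\<lambda>y. f y + \<mu>1 * (inner (fst (snd y)) (fst (snd y)) - \<tau>1)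
      + \<mu>2 * (inner (snd (snd y)) (snd (snd y)) - \<tau>2)) has_derivative
      (\<lambda>h. D h + \<mu>1 * (2 * inner a (fst (snd h))) + \<mu>2 * (2 * inner b (snd (snd h))))) (at (t, a, b))"
    by (intro has_derivative_add has_derivative_mult_right D dA dB)
  then have "((\<lambda>y. f y + \<mu>1 * (inner (fst (snd y)) (fst (snd y)) - \<tau>1)
      + \<mu>2 * (inner (snd (snd y)) (snd (snd y)) - \<tau>2)) has_derivative (\<lambda>_. 0)) (at (t, a, b))"
    by (simp only: zero)
  then show ?thesis
    unfolding kkt2_def using a b \<mu>1(1,2) \<mu>2(1,2)
    by (auto simp: split_beta power2_norm_eq_inner)
qed


section \<open>Alternating minimization\<close>

lemma alternating_min_decseq:
  fixes f :: "'a \<times> 'b \<Rightarrow> 'c::order"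
  assumes T_opt: "\<And>k t. f (T k, S k) \<le> f (t, S k)"
    and S_opt: "\<And>k s. s \<in> C \<Longrightarrow> f (T k, S (Suc k)) \<le> f (T k, s)"
    and S_feas: "\<And>k. S (Suc k) \<in> C"
  shows "decseq (\<lambda>k. f (T k, S (Suc k)))"
  unfolding decseq_Suc_iff
proof
  fix k
  have "f (T (Suc k), S (Suc (Suc k))) \<le> f (T (Suc k), S (Suc k))"
    using S_opt S_feas .
  also have "\<dots> \<le> f (T k, S (Suc k))"
    using T_opt .
  finally show "f (T (Suc k), S (Suc (Suc k))) \<le> f (T k, S (Suc k))" .
qed

lemma alternating_min_limit_point:
  fixes f :: "'a::t2_space \<times> 'b::t2_space \<Rightarrow> real"
  assumes T_opt: "\<And>k t. f (T k, S k) \<le> f (t, S k)"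
    and S_opt: "\<And>k s. s \<in> C \<Longrightarrow> f (T k, S (Suc k)) \<le> f (T k, s)"
    and S_feas: "\<And>k. S (Suc k) \<in> C"
    and "closed C" and cont: "\<And>x. isCont f x" and lower: "\<And>x. B \<le> f x"
    and r: "strict_mono r" and lim: "(\<lambda>k. (T (r k), S (Suc (r k)))) \<longlonglongrightarrow> (t, s)"
  shows "s \<in> C" and "\<And>t'. f (t, s) \<le> f (t', s)" and "\<And>s'. s' \<in> C \<Longrightarrow> f (t, s) \<le> f (t, s')"
proof -
  define v where "v k = f (T k, S (Suc k))" for k
  have dec: "decseq v"
    unfolding v_def using T_opt S_opt S_feas by (rule alternating_min_decseq)
  obtain L where vL: "v \<longlonglongrightarrow> L"
    using decseq_convergent[OF dec, of B] lower unfolding v_def by blast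
  have "(\<lambda>k. v (r k)) \<longlonglongrightarrow> f (t, s)"
    unfolding v_def by (rule isCont_tendsto_compose[OF cont lim])
  moreover have "(\<lambda>k. v (r k)) \<longlonglongrightarrow> L"
    using LIMSEQ_subseq_LIMSEQ[OF vL r] by (simp add: o_def)
  ultimately have fL: "f (t, s) = L"
    by (rule LIMSEQ_unique)
  have S_lim: "(\<lambda>k. S (Suc (r k))) \<longlonglongrightarrow> s" and T_lim: "(\<lambda>k. T (r k)) \<longlonglongrightarrow> t"
    using tendsto_snd[OF lim] tendsto_fst[OF lim] by simp_all
  show "s \<in> C"
    using \<open>closed C\<close> S_feas S_lim by (rule closed_sequentially)
  show "f (t, s) \<le> f (t', s)" for t'
  proof -
    \<comment> \<open>The value after the next \<open>T\<close>-step is squeezed between consecutive values of \<open>v\<close>.\<close>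
    define w where "w k = f (T (Suc k), S (Suc k))" for k
    have "w \<longlonglongrightarrow> L"
    proof (rule tendsto_sandwich[of "\<lambda>k. v (Suc k)" w _ v])
      show "\<forall>\<^sub>F k in sequentially. v (Suc k) \<le> w k"
        unfolding v_def w_def using S_opt S_feas by simp
      show "\<forall>\<^sub>F k in sequentially. w k \<le> v k"
        unfolding v_def w_def using T_opt by simp
    qed (use vL LIMSEQ_Suc in auto)
    then have "(\<lambda>k. w (r k)) \<longlonglongrightarrow> L"
      using LIMSEQ_subseq_LIMSEQ[OF _ r] by (simp add: o_def)
    moreover have "(\<lambda>k. f (t', S (Suc (r k)))) \<longlonglongrightarrow> f (t', s)"
      by (intro isCont_tendsto_compose[OF cont] tendsto_Pair tendsto_const S_lim)
    moreover have "w (r k) \<le> f (t', S (Suc (r k)))" for k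
      unfolding w_def by (rule T_opt)
    ultimately show ?thesis
      using fL by (simp add: LIMSEQ_le)
  qed
  show "f (t, s) \<le> f (t, s')" if "s' \<in> C" for s'
  proof -
    have "(\<lambda>k. f (T (r k), s')) \<longlonglongrightarrow> f (t, s')"
      by (intro isCont_tendsto_compose[OF cont] tendsto_Pair tendsto_const T_lim)
    moreover have "v (r k) \<le> f (T (r k), s')" for k
      unfolding v_def using S_opt that .
    ultimately show ?thesis
      using fL \<open>(\<lambda>k. v (r k)) \<longlonglongrightarrow> L\<close> by (simp add: LIMSEQ_le)
  qed
qed

lemma alternating_min_kkt2:
  fixes f :: "'a::euclidean_space \<times> 'b::euclidean_space \<times> 'c::euclidean_space \<Rightarrow> real"
  assumes diff: "\<And>x. f differentiable (at x)" and nonneg: "\<And>x. 0 \<le> f x"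
    and "0 < \<tau>1" and "0 < \<tau>2" and "bounded (range T)"
    and T_opt: "\<And>k t. f (T k, A k, B k) \<le> f (t, A k, B k)"
    and feas: "\<And>k. (norm (A (Suc k)))^2 \<le> \<tau>1 \<and> (norm (B (Suc k)))^2 \<le> \<tau>2"
    and AB_opt: "\<And>k a b. (norm a)^2 \<le> \<tau>1 \<Longrightarrow> (norm b)^2 \<le> \<tau>2 \<Longrightarrow>
      f (T k, A (Suc k), B (Suc k)) \<le> f (T k, a, b)"
  shows "decseq (\<lambda>k. f (T k, A (Suc k), B (Suc k))) \<and>
         convergent (\<lambda>k. f (T k, A (Suc k), B (Suc k))) \<and>
         (\<exists>x. \<exists>r. strict_mono r \<and> ((\<lambda>k. (T (r k), A (Suc (r k)), B (Suc (r k)))) \<longlonglongrightarrow> x)) \<and>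
         (\<forall>x. (\<exists>r. strict_mono r \<and> ((\<lambda>k. (T (r k), A (Suc (r k)), B (Suc (r k)))) \<longlonglongrightarrow> x)) \<longrightarrow>
            kkt2 f (\<lambda>(t, a, b). (norm a)^2 - \<tau>1) (\<lambda>(t, a, b). (norm b)^2 - \<tau>2) x)"
proof -
  define C :: "('b \<times> 'c) set" where "C = {p. (norm (fst p))^2 \<le> \<tau>1 \<and> (norm (snd p))^2 \<le> \<tau>2}"
  have "closed C"
    unfolding C_def by (intro closed_Collect_conj closed_Collect_le continuous_intros)
  have S_feas: "(A (Suc k), B (Suc k)) \<in> C" for k
    using feas by (simp add: C_def)
  have S_opt: "f (T k, A (Suc k), B (Suc k)) \<le> f (T k, s)" if "s \<in> C" for k s
    using that AB_opt by (cases s) (simp add: C_def)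
  have dec: "decseq (\<lambda>k. f (T k, A (Suc k), B (Suc k)))"
    using alternating_min_decseq[of f T "\<lambda>k. (A k, B k)" C] T_opt S_opt S_feas by simp
  moreover have "convergent (\<lambda>k. f (T k, A (Suc k), B (Suc k)))"
    using decseq_convergent[OF dec, of 0] nonneg by (metis convergent_def)
  moreover have "\<exists>x r. strict_mono r \<and> ((\<lambda>k. (T (r k), A (Suc (r k)), B (Suc (r k)))) \<longlonglongrightarrow> x)"
  proof -
    have "norm (A (Suc k)) \<le> sqrt \<tau>1 \<and> norm (B (Suc k)) \<le> sqrt \<tau>2" for k
      using feas[of k] by (simp add: real_le_rsqrt)
    then have "range (\<lambda>k. (T k, A (Suc k), B (Suc k)))
        \<subseteq> range T \<times> (cball 0 (sqrt \<tau>1) \<times> cball 0 (sqrt \<tau>2))"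
      by auto
    then have "bounded (range (\<lambda>k. (T k, A (Suc k), B (Suc k))))"
      by (rule bounded_subset[OF bounded_Times[OF \<open>bounded (range T)\<close>
            bounded_Times[OF bounded_cball bounded_cball]]])
    from bounded_imp_convergent_subsequence[OF this] show ?thesis
      unfolding o_def by blast
  qed
  moreover have "kkt2 f (\<lambda>(t, a, b). (norm a)^2 - \<tau>1) (\<lambda>(t, a, b). (norm b)^2 - \<tau>2) x"
    if "strict_mono r" and lim: "(\<lambda>k. (T (r k), A (Suc (r k)), B (Suc (r k)))) \<longlonglongrightarrow> x" for x r
  proof -
    obtain t a b where x: "x = (t, a, b)" by (cases x)
    note limit_point = alternating_min_limit_point[of f T "\<lambda>k. (A k, B k)" C 0 r t "(a, b)",
        OF T_opt S_opt S_feas \<open>closed C\<close> differentiable_imp_continuous_within[OF diff] nonneg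
        \<open>strict_mono r\<close>]
    show ?thesis
      unfolding x using limit_point lim \<open>0 < \<tau>1\<close> \<open>0 < \<tau>2\<close>
      by (intro kkt2_blockwise_min diff) (auto simp: C_def x)
  qed
  ultimately show ?thesis by blast
qed

theorem theorem1:
  fixes Zt1 Ct1 :: "complex^'n1^'n1"
    and Zt2 Ct2 :: "complex^'n2^'n2"
    and Zr Cr :: "complex^'m^'m"
    and Kq :: "complex^'l^'l" and Kr :: "complex^'m^'m"
    and \<tau>1 \<tau>2 :: real
    and T :: "nat \<Rightarrow> complex^('l \<times> 'm)^(('n1 + 'n2) \<times> 'm)"
    and S1 :: "nat \<Rightarrow> complex^'l^'n1"
    and S2 :: "nat \<Rightarrow> complex^'l^'n2"
  defines "Ct \<equiv> blkdiag Ct1 Ct2"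
    and "KR \<equiv> kron Kq Kr"
  assumes "herm_pd Zt1" and "herm_pd Zt2" and "herm_pd Zr"
    and "Zt1 = Ct1 ** hconj Ct1" and "Zt2 = Ct2 ** hconj Ct2" and "Zr = Cr ** hconj Cr"
    and "herm_pd KR"
    and "\<tau>1 > 0" and "\<tau>2 > 0"
    and "pow (S1 0) \<le> \<tau>1" and "pow (S2 0) \<le> \<tau>2"
    and step_T: "\<forall>k. T k = lmmse Ct Cr KR (stack (S1 k) (S2 k))"
    and step_S: "\<forall>k. pow (S1 (Suc k)) \<le> \<tau>1 \<and> pow (S2 (Suc k)) \<le> \<tau>2 \<and>
        (\<forall>A B. pow A \<le> \<tau>1 \<longrightarrow> pow B \<le> \<tau>2 \<longrightarrow>
           eR Ct Cr KR (T k) (stack (S1 (Suc k)) (S2 (Suc k))) \<le> eR Ct Cr KR (T k) (stack A B))"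
  shows "decseq (\<lambda>k. eR Ct Cr KR (T k) (stack (S1 (Suc k)) (S2 (Suc k)))) \<and>
         convergent (\<lambda>k. eR Ct Cr KR (T k) (stack (S1 (Suc k)) (S2 (Suc k)))) \<and>
         (\<exists>x. \<exists>r. strict_mono r \<and> ((\<lambda>k. (T (r k), S1 (Suc (r k)), S2 (Suc (r k)))) \<longlonglongrightarrow> x)) \<and>
         (\<forall>x. (\<exists>r. strict_mono r \<and> ((\<lambda>k. (T (r k), S1 (Suc (r k)), S2 (Suc (r k)))) \<longlonglongrightarrow> x)) \<longrightarrow>
            kkt2 (\<lambda>(Tb, A, B). eR Ct Cr KR Tb (stack A B))
                 (\<lambda>(Tb, A, B). pow A - \<tau>1) (\<lambda>(Tb, A, B). pow B - \<tau>2) x)"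
proof -
  have KR: "herm_pd KR" by fact
  obtain H1 H2 H3 where "H1 ** Ct1 = mat 1" and "H2 ** Ct2 = mat 1" and "H3 ** Cr = mat 1"
    using left_invertible_of_herm_pd_gram \<open>herm_pd Zt1\<close> \<open>herm_pd Zt2\<close> \<open>herm_pd Zr\<close>
      \<open>Zt1 = Ct1 ** hconj Ct1\<close> \<open>Zt2 = Ct2 ** hconj Ct2\<close> \<open>Zr = Cr ** hconj Cr\<close> by metis
  then have "kron (blkdiag H1 H2) H3 ** kron Ct Cr = mat 1"
    unfolding Ct_def by (rule left_invertible_kron_blkdiag)
  then obtain B where "norm (T k) \<le> B" for k
    using norm_lmmse_bounded[OF KR] step_T by metis
  then have "bounded (range T)"
    by (auto intro: boundedI)
  show ?thesis
    unfolding pow_eq_norm_power2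
  proof (rule alternating_min_kkt2[of "\<lambda>(Tb, A, B). eR Ct Cr KR Tb (stack A B)", unfolded prod.case])
    show "eR Ct Cr KR (T k) (stack (S1 k) (S2 k)) \<le> eR Ct Cr KR t (stack (S1 k) (S2 k))" for k t
      using step_T eR_lmmse_le[OF KR] by simp
    show "(norm (S1 (Suc k)))^2 \<le> \<tau>1 \<and> (norm (S2 (Suc k)))^2 \<le> \<tau>2" for k
      using step_S by (simp add: pow_eq_norm_power2)
    show "eR Ct Cr KR (T k) (stack (S1 (Suc k)) (S2 (Suc k))) \<le> eR Ct Cr KR (T k) (stack a b)"
      if "(norm a)^2 \<le> \<tau>1" and "(norm b)^2 \<le> \<tau>2" for k a b
      using step_S that by (simp add: pow_eq_norm_power2)
  qed (use \<open>\<tau>1 > 0\<close> \<open>\<tau>2 > 0\<close> \<open>bounded (range T)\<close> in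
      \<open>auto intro: differentiable_eR_stack eR_nonneg[OF KR]\<close>)
qed

end
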